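(* Let $S$ be a semigroup and $a\in S$ an idempotent with $aSa\subseteq\operatorname{Reg}(S)$; let $P=\{x\in Sa: x\,\mathscr L\,ax\}$ and let $\rho$ be the number of $\mathscr R^P$-classes contained in $\widehat R^a_a=\{x\in P: ax\ \mathscr R^{aSa}\ a\}$. Then $$\operatorname{rank}(\mathbb E(Sa))\ge\operatorname{rank}(\mathbb E(aSa))+\rho-1\quad\text{and}\quad \operatorname{idrank}(\mathbb E(Sa))\ge\operatorname{idrank}(\mathbb E(aSa))+\rho-1,$$ with equality in both if $P$ is RI-dominated.
   Context: $\mathbb E(T)$ is the subsemigroup of $T$ generated by its idempotents. $\operatorname{rank}(T)$ is the minimum cardinality of a generating set; for idempotent-generated $T$, $\operatorname{idrank}(T)$ is the minimum cardinality of a generating set consisting of idempotents. $\mathscr R^P$, $\mathscr R^{aSa}$ are Green's $\mathscr R$-relations in $P$ and $aSa$. A semigroup $T$ is RI-dominated if for every $x\in T$ there is a right identity $e$ of $T$ with $x\in eT^1$. *)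

theory Defs
  imports Main
begin

text \<open>The semigroup S is the whole carrier type 'a of class semigroup_mult.
  Subsemigroups and subsets of S are sets of type 'a set.\<close>

definition idem :: "'a::semigroup_mult \<Rightarrow> bool" where
  "idem e \<longleftrightarrow> e * e = e"

definition Reg :: "'a::semigroup_mult set" where
  "Reg = {x. \<exists>y. x * y * x = x}"

inductive_set sgp_gen :: "'a::semigroup_mult set \<Rightarrow> 'a set" for X where
  base: "x \<in> X \<Longrightarrow> x \<in> sgp_gen X"
| mult: "x \<in> sgp_gen X \<Longrightarrow> y \<in> sgp_gen X \<Longrightarrow> x * y \<in> sgp_gen X"

definition Egen :: "'a::semigroup_mult set \<Rightarrow> 'a set" where
  "Egen T = sgp_gen {e \<in> T. idem e}"

definition generates :: "'a::semigroup_mult set \<Rightarrow> 'a set \<Rightarrow> bool" where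
  "generates T X \<longleftrightarrow> X \<subseteq> T \<and> sgp_gen X = T"

text \<open>A generating set of minimum cardinality (the rank is its cardinality).\<close>
definition rank_set :: "'a::semigroup_mult set \<Rightarrow> 'a set" where
  "rank_set T = (SOME X. generates T X \<and>
       (\<forall>Y. generates T Y \<longrightarrow> (card_of X, card_of Y) \<in> ordLeq))"


definition idrank_set :: "'a::semigroup_mult set \<Rightarrow> 'a set" where
  "idrank_set T = (SOME X. generates T X \<and> (\<forall>x\<in>X. idem x) \<and>
       (\<forall>Y. generates T Y \<and> (\<forall>y\<in>Y. idem y) \<longrightarrow> (card_of X, card_of Y) \<in> ordLeq))"


definition greenL :: "'a::semigroup_mult \<Rightarrow> 'a \<Rightarrow> bool" where
  "greenL x y \<longleftrightarrow> insert x (range (\<lambda>s. s * x)) = insert y (range (\<lambda>s. s * y))"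

definition greenR_in :: "'a::semigroup_mult set \<Rightarrow> 'a \<Rightarrow> 'a \<Rightarrow> bool" where
  "greenR_in T x y \<longleftrightarrow> insert x ((\<lambda>t. x * t) ` T) = insert y ((\<lambda>t. y * t) ` T)"

definition R_classes :: "'a::semigroup_mult set \<Rightarrow> 'a set set" where
  "R_classes T = {C. \<exists>x\<in>T. C = {y \<in> T. greenR_in T x y}}"

definition RI_dominated :: "'a::semigroup_mult set \<Rightarrow> bool" where
  "RI_dominated T \<longleftrightarrow> (\<forall>x\<in>T. \<exists>e\<in>T. (\<forall>t\<in>T. t * e = t) \<and> x \<in> insert e ((\<lambda>t. e * t) ` T))"

definition leftmult :: "'a::semigroup_mult \<Rightarrow> 'a set" where
  "leftmult a = range (\<lambda>s. s * a)"

definition sandwich :: "'a::semigroup_mult \<Rightarrow> 'a set" where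
  "sandwich a = range (\<lambda>s. a * s * a)"

end

theory Submission
  imports Defs
begin

text \<open>The map \<open>x \<mapsto> a x\<close> is a homomorphism from \<open>Sa\<close> onto \<open>aSa\<close> sending \<open>\<bbbE>(Sa)\<close> onto
  \<open>\<bbbE>(aSa)\<close>. In \<open>\<bbbE>(aSa)\<close> the only element with a right inverse to \<open>a\<close> is \<open>a\<close> itself, so every
  generator of \<open>\<bbbE>(Sa)\<close> lying in \<open>\<widehat>R\<^sup>a\<^sub>a\<close> is sent to \<open>a\<close>. On the other hand a left factor in \<open>P\<close>
  of an element of \<open>\<widehat>R\<^sup>a\<^sub>a\<close> stays in \<open>\<widehat>R\<^sup>a\<^sub>a\<close> and in the same \<open>\<R>\<^sup>P\<close>-class; since each of these
  classes contains an idempotent, each must contain a generator of \<open>\<bbbE>(Sa)\<close>. This gives the lower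
  bounds. If \<open>P\<close> is RI-dominated, every idempotent \<open>f\<close> of \<open>Sa\<close> factors as \<open>g (a f)\<close>, where \<open>g\<close> is
  \<open>a\<close> or a fixed idempotent of the \<open>\<R>\<^sup>P\<close>-class of a right identity \<open>e\<close> with \<open>f \<in> eP\<^sup>1\<close>; so a
  generating set of \<open>\<bbbE>(aSa)\<close> together with one idempotent from each class other than that of \<open>a\<close>
  generates \<open>\<bbbE>(Sa)\<close>.\<close>

unbundle cardinal_syntax

lemma ex_card_of_minimal:
  assumes "Q X"
  shows "\<exists>M. Q M \<and> (\<forall>Y. Q Y \<longrightarrow> |M| \<le>o |Y| )"
proof -
  have "card_of ` {X. Q X} \<noteq> {}" using assms by blast
  moreover have "\<forall>r \<in> card_of ` {X. Q X}. Well_order r"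
    using card_of_Well_order by blast
  ultimately obtain r where "r \<in> card_of ` {X. Q X}" "\<forall>r' \<in> card_of ` {X. Q X}. r \<le>o r'"
    by (metis exists_minim_Well_order)
  then show ?thesis by blast
qed

lemma minimal_Plus_ordLeq:
  assumes "\<forall>Y. Q Y \<longrightarrow> |M| \<le>o |Y|" and "Q Z" and "|Z <+> B| \<le>o |X <+> C|"
  shows "|M <+> B| \<le>o |X <+> C|"
  using card_of_Plus_mono1[of M Z B] assms by (blast intro: ordLeq_transitive)

subsection \<open>Generated subsemigroups and ranks\<close>

lemma sgp_gen_least:
  assumes "X \<subseteq> A" and "\<And>x y. x \<in> A \<Longrightarrow> y \<in> A \<Longrightarrow> x * y \<in> A"
  shows "sgp_gen X \<subseteq> A"
proof
  fix z assume "z \<in> sgp_gen X"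
  then show "z \<in> A" by (induction z rule: sgp_gen.induct) (use assms in auto)
qed

lemma sgp_gen_mono: "X \<subseteq> Y \<Longrightarrow> sgp_gen X \<subseteq> sgp_gen Y"
  by (rule sgp_gen_least) (auto intro: sgp_gen.intros)

lemma sgp_gen_left_factor:
  "z \<in> sgp_gen X \<Longrightarrow> \<exists>x\<in>X. z = x \<or> (\<exists>q\<in>sgp_gen X. z = x * q)"
proof (induction z rule: sgp_gen.induct)
  case (base x)
  then show ?case by auto
next
  case (mult z1 z2)
  then obtain x where "x \<in> X" "z1 = x \<or> (\<exists>q\<in>sgp_gen X. z1 = x * q)" by blast
  with mult.hyps show ?case by (metis mult.assoc sgp_gen.mult)
qed

lemma sgp_gen_sgp_gen: "sgp_gen (sgp_gen X) = sgp_gen X"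
  by (intro equalityI sgp_gen_least) (auto intro: sgp_gen.intros)

lemma generates_Egen_idempotents: "generates (Egen A) {e \<in> A. idem e}"
  unfolding generates_def Egen_def by (auto intro: sgp_gen.base)

lemma generates_Egen_self: "generates (Egen A) (Egen A)"
  unfolding generates_def Egen_def by (simp add: sgp_gen_sgp_gen)

lemma rank_set_Egen:
  "generates (Egen A) (rank_set (Egen A))
    \<and> (\<forall>Y. generates (Egen A) Y \<longrightarrow> |rank_set (Egen A)| \<le>o |Y| )"
  unfolding rank_set_def by (rule someI_ex, rule ex_card_of_minimal) (rule generates_Egen_self)

lemma idrank_set_Egen:
  "generates (Egen A) (idrank_set (Egen A)) \<and> (\<forall>x\<in>idrank_set (Egen A). idem x)
    \<and> (\<forall>Y. generates (Egen A) Y \<and> (\<forall>y\<in>Y. idem y) \<longrightarrow> |idrank_set (Egen A)| \<le>o |Y| )"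
proof -
  have "generates (Egen A) {e \<in> A. idem e} \<and> (\<forall>x\<in>{e \<in> A. idem e}. idem x)"
    using generates_Egen_idempotents by blast
  then show ?thesis unfolding idrank_set_def
    by (rule someI_ex[OF ex_card_of_minimal[of "\<lambda>X. generates (Egen A) X \<and> (\<forall>x\<in>X. idem x)"],
        unfolded conj_assoc])
qed

subsection \<open>Principal one-sided ideals\<close>

lemma principal_right_ideal_subset:
  assumes "\<And>p q. p \<in> A \<Longrightarrow> q \<in> A \<Longrightarrow> p * q \<in> A"
    and "u \<in> insert v ((*) v ` A)"
  shows "insert u ((*) u ` A) \<subseteq> insert (v::'a::semigroup_mult) ((*) v ` A)"
proof
  fix z assume "z \<in> insert u ((*) u ` A)"
  then consider "z = u" | p where "p \<in> A" "z = u * p" by blast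
  then show "z \<in> insert v ((*) v ` A)"
  proof cases
    case 1
    then show ?thesis using assms(2) by simp
  next
    case (2 p)
    from assms(2) consider "u = v" | q where "q \<in> A" "u = v * q" by blast
    then show ?thesis
    proof cases
      case 1
      then show ?thesis using 2 by blast
    next
      case (2 q)
      then have "z = v * (q * p)" using \<open>z = u * p\<close> by (simp add: mult.assoc)
      then show ?thesis using assms(1) \<open>p \<in> A\<close> \<open>q \<in> A\<close> by blast
    qed
  qed
qed

lemma greenR_inI:
  assumes "\<And>p q. p \<in> A \<Longrightarrow> q \<in> A \<Longrightarrow> p * q \<in> A"
    and "u \<in> insert v ((*) v ` A)" and "v \<in> insert u ((*) u ` A)"
  shows "greenR_in A (u::'a::semigroup_mult) v"
  unfolding greenR_in_def
  using principal_right_ideal_subset[OF assms(1,2)] principal_right_ideal_subset[OF assms(1,3)]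
  by blast

lemma greenR_in_sym: "greenR_in A x y \<Longrightarrow> greenR_in A y x"
  unfolding greenR_in_def by simp

lemma greenR_in_mem: "greenR_in A x y \<Longrightarrow> y \<in> insert x ((*) x ` A)"
  unfolding greenR_in_def by blast

lemma principal_left_ideal_subset:
  assumes "u \<in> insert v (range (\<lambda>s. s * v))"
  shows "insert u (range (\<lambda>s. s * u)) \<subseteq> insert (v::'a::semigroup_mult) (range (\<lambda>s. s * v))"
proof
  fix z assume "z \<in> insert u (range (\<lambda>s. s * u))"
  then consider "z = u" | p where "z = p * u" by blast
  then show "z \<in> insert v (range (\<lambda>s. s * v))"
  proof cases
    case 1
    then show ?thesis using assms by simp
  next
    case (2 p)
    from assms consider "u = v" | q where "u = q * v" by blast
    then show ?thesis
    proof cases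
      case 1
      then show ?thesis using 2 by blast
    next
      case (2 q)
      then have "z = (p * q) * v" using \<open>z = p * u\<close> by (simp add: mult.assoc)
      then show ?thesis by blast
    qed
  qed
qed

lemma greenLI:
  assumes "y \<in> insert x (range (\<lambda>s. s * x))" and "x \<in> insert y (range (\<lambda>s. s * y))"
  shows "greenL x y"
  unfolding greenL_def
  using principal_left_ideal_subset[OF assms(1)] principal_left_ideal_subset[OF assms(2)] by blast

subsection \<open>The corner of an idempotent\<close>

locale idempotent_corner =
  fixes a :: "'a::semigroup_mult" and P Rhat Rcls
  assumes a_idem: "idem a"
    and P_eq: "P = {x \<in> leftmult a. greenL x (a * x)}"
    and Rhat_eq: "Rhat = {x \<in> P. greenR_in (sandwich a) (a * x) a}"
    and Rcls_eq: "Rcls = {C \<in> R_classes P. C \<subseteq> Rhat}"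
begin

definition Rcl :: "'a \<Rightarrow> 'a set" where
  "Rcl x = {y \<in> P. greenR_in P x y}"

lemma a_mult_a: "a * a = a"
  using a_idem by (simp add: idem_def)

lemma a_mult_a_mult: "a * (a * z) = a * z"
  by (simp add: a_mult_a mult.assoc[symmetric])

lemma leftmult_iff: "x \<in> leftmult a \<longleftrightarrow> x * a = x"
  unfolding leftmult_def
proof
  assume "x \<in> range (\<lambda>s. s * a)"
  then obtain s where "x = s * a" by blast
  then show "x * a = x" by (simp add: mult.assoc a_mult_a)
next
  assume "x * a = x"
  then show "x \<in> range (\<lambda>s. s * a)" by (metis rangeI)
qed

lemma sandwich_iff: "x \<in> sandwich a \<longleftrightarrow> a * x = x \<and> x * a = x"
  unfolding sandwich_def
proof
  assume "x \<in> range (\<lambda>s. a * s * a)"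
  then obtain s where "x = a * s * a" by blast
  then show "a * x = x \<and> x * a = x" by (metis a_mult_a mult.assoc)
next
  assume "a * x = x \<and> x * a = x"
  then have "x = a * x * a" by simp
  then show "x \<in> range (\<lambda>s. a * s * a)" by blast
qed

lemma a_in_sandwich: "a \<in> sandwich a"
  by (simp add: sandwich_iff a_mult_a)

lemma a_mult_in_sandwich: "x * a = x \<Longrightarrow> a * x \<in> sandwich a"
  by (simp add: sandwich_iff a_mult_a_mult mult.assoc)

lemma sandwich_mult: "x \<in> sandwich a \<Longrightarrow> y \<in> sandwich a \<Longrightarrow> x * y \<in> sandwich a"
  by (metis sandwich_iff mult.assoc)

lemma leftmult_mult: "y \<in> leftmult a \<Longrightarrow> x * y \<in> leftmult a"
  by (metis leftmult_iff mult.assoc)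

lemma a_mult_hom: "x * a = x \<Longrightarrow> a * (x * y) = (a * x) * (a * y)"
  by (metis mult.assoc)

lemma P_mult_a: "x \<in> P \<Longrightarrow> x * a = x"
  using P_eq leftmult_iff by auto

lemma P_left_factor: "x \<in> P \<Longrightarrow> \<exists>s. x = s * a * x"
proof -
  assume "x \<in> P"
  then have "x \<in> insert (a * x) (range (\<lambda>s. s * (a * x)))"
    using P_eq unfolding greenL_def by blast
  then show ?thesis by (metis a_mult_a insertE mult.assoc rangeE)
qed

lemma PI: "x * a = x \<Longrightarrow> x = s * a * x \<Longrightarrow> x \<in> P"
  unfolding P_eq using leftmult_iff greenLI
  by (metis (no_types, lifting) insertI2 mem_Collect_eq mult.assoc rangeI)

lemma P_mult: "x \<in> P \<Longrightarrow> y \<in> P \<Longrightarrow> x * y \<in> P"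
proof -
  assume x: "x \<in> P" and y: "y \<in> P"
  obtain s where "x = s * a * x" using P_left_factor x by blast
  then have "x * y = s * a * (x * y)" by (metis mult.assoc)
  moreover have "x * y * a = x * y" using P_mult_a y by (simp add: mult.assoc)
  ultimately show ?thesis using PI by blast
qed

lemma sandwich_subset_P: "sandwich a \<subseteq> P"
proof
  fix x assume "x \<in> sandwich a"
  then have "x * a = x" "x = a * a * x" using sandwich_iff a_mult_a by auto
  then show "x \<in> P" by (rule PI)
qed

lemma a_in_P: "a \<in> P"
  using sandwich_subset_P a_in_sandwich by blast

lemma idem_in_P: "idem e \<Longrightarrow> e \<in> leftmult a \<Longrightarrow> e \<in> P"
  using PI leftmult_iff idem_def by (metis mult.assoc)

lemma greenR_in_sandwich_a_iff:
  assumes "z \<in> sandwich a"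
  shows "greenR_in (sandwich a) z a \<longleftrightarrow> (\<exists>t\<in>sandwich a. z * t = a)"
proof
  assume "greenR_in (sandwich a) z a"
  then have "a \<in> insert z ((*) z ` sandwich a)" by (rule greenR_in_mem)
  then show "\<exists>t\<in>sandwich a. z * t = a"
    using assms a_in_sandwich sandwich_iff by auto
next
  assume "\<exists>t\<in>sandwich a. z * t = a"
  then obtain t where t: "t \<in> sandwich a" "z * t = a" by blast
  have "a * z = z" using assms sandwich_iff by auto
  then have za: "z \<in> insert a ((*) a ` sandwich a)" using assms by (metis image_eqI insertI2)
  have az: "a \<in> insert z ((*) z ` sandwich a)" using t by (metis image_eqI insertI2)
  show "greenR_in (sandwich a) z a" using greenR_inI[OF sandwich_mult za az] by blast
qed

lemma Rhat_iff: "x \<in> Rhat \<longleftrightarrow> x \<in> P \<and> (\<exists>t\<in>sandwich a. a * x * t = a)"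
  using Rhat_eq greenR_in_sandwich_a_iff a_mult_in_sandwich P_mult_a by auto

lemma a_in_Rhat: "a \<in> Rhat"
  using Rhat_iff a_in_P a_in_sandwich a_mult_a by metis

text \<open>Left factors stay in \<open>\<widehat>R\<^sup>a\<^sub>a\<close> and in the same \<open>\<R>\<^sup>P\<close>-class: from \<open>a x t = a\<close> and \<open>y = s a y\<close>
  one gets \<open>y = x (t a y)\<close>.\<close>
lemma Rhat_left_factor:
  assumes x: "x \<in> Rhat" and y: "y \<in> P" and q: "q \<in> P" and xy: "x = y * q"
  shows "y \<in> Rhat \<and> greenR_in P y x"
proof -
  obtain t where t: "t \<in> sandwich a" "a * x * t = a" using x Rhat_iff by blast
  have ta: "t * a = t" "a * t = t" using t sandwich_iff by auto
  have ya: "y * a = y" using y P_mult_a by auto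
  have "a * q * t \<in> sandwich a" using sandwich_iff ta a_mult_a by (metis mult.assoc)
  moreover have "a * y * (a * q * t) = a" using t(2) xy ya by (metis mult.assoc)
  ultimately have "y \<in> Rhat" using Rhat_iff y by blast
  obtain s where s: "y = s * a * y" using P_left_factor y by blast
  have "y = s * a * (a * y)" using s a_mult_a by (metis mult.assoc)
  also have "a * y = a * x * t * a * y" using t(2) a_mult_a by (metis mult.assoc)
  finally have "y = (s * a * x) * (t * a * y)" by (simp add: mult.assoc a_mult_a_mult)
  also have "s * a * x = x" using s xy by (metis mult.assoc)
  finally have "y = x * (t * a * y)" .
  moreover have "t * a * y \<in> P" using ta(1) t(1) sandwich_subset_P y P_mult by auto
  ultimately have yx: "y \<in> insert x ((*) x ` P)" by (metis image_eqI insertI2)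
  have xy': "x \<in> insert y ((*) y ` P)" using xy q by (metis image_eqI insertI2)
  have "greenR_in P y x" using greenR_inI[OF P_mult yx xy'] by blast
  with \<open>y \<in> Rhat\<close> show ?thesis by blast
qed

lemma Rcl_eq: "greenR_in P x y \<Longrightarrow> Rcl x = Rcl y"
  unfolding Rcl_def greenR_in_def by auto

lemma Rcl_self: "x \<in> P \<Longrightarrow> x \<in> Rcl x"
  unfolding Rcl_def greenR_in_def by auto

lemma R_classes_P_eq: "R_classes P = Rcl ` P"
  unfolding R_classes_def Rcl_def by blast

lemma Rhat_prefix:
  assumes "x \<in> Rhat" and "y \<in> P" and "x \<in> insert y ((*) y ` P)"
  shows "y \<in> Rhat \<and> Rcl y = Rcl x"
  using assms(3)
proof
  assume "x \<in> (*) y ` P"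
  then obtain q where "q \<in> P" "x = y * q" by blast
  then show ?thesis using Rhat_left_factor[OF assms(1,2)] Rcl_eq by blast
qed (use assms in simp)

lemma Rcl_in_Rcls:
  assumes "x \<in> Rhat"
  shows "Rcl x \<in> Rcls"
proof -
  have "x \<in> P" using assms Rhat_iff by auto
  moreover have "Rcl x \<subseteq> Rhat"
  proof
    fix y assume "y \<in> Rcl x"
    then have "y \<in> P" "greenR_in P y x" unfolding Rcl_def greenR_in_def by auto
    then show "y \<in> Rhat" using Rhat_prefix[OF assms] greenR_in_mem by blast
  qed
  ultimately show ?thesis using Rcls_eq R_classes_P_eq by auto
qed

text \<open>The idempotent is \<open>s a\<close>, where \<open>x = s a x\<close>; it is \<open>\<R>\<^sup>P\<close>-related to \<open>x\<close> via \<open>x t = s a\<close>.\<close>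
lemma Rhat_greenR_in_idem:
  assumes "x \<in> Rhat"
  shows "\<exists>e. idem e \<and> e \<in> P \<and> greenR_in P x e"
proof -
  have x: "x \<in> P" using assms Rhat_iff by auto
  obtain t where t: "t \<in> sandwich a" "a * x * t = a" using assms Rhat_iff by blast
  obtain s where s: "x = s * a * x" using P_left_factor x by blast
  have xt: "x * t = s * a" using s t(2) by (metis mult.assoc)
  have "idem (s * a)" unfolding idem_def using xt t(2) by (metis mult.assoc)
  moreover have "s * a \<in> P" using idem_in_P calculation unfolding leftmult_def by blast
  moreover have "greenR_in P x (s * a)"
  proof -
    have x_sa: "x \<in> insert (s * a) ((*) (s * a) ` P)" using s x by (metis image_eqI insertI2 mult.assoc)
    have "t \<in> P" using sandwich_subset_P t by blast
    then have sa_x: "s * a \<in> insert x ((*) x ` P)" using xt by (metis image_eqI insertI2)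
    show ?thesis using greenR_inI[OF P_mult x_sa sa_x] by blast
  qed
  ultimately show ?thesis by blast
qed

lemma Rcls_idem:
  assumes "C \<in> Rcls"
  shows "\<exists>e\<in>C. idem e"
proof -
  obtain x where x: "x \<in> P" "C = Rcl x" using assms Rcls_eq R_classes_P_eq by auto
  then have "x \<in> Rhat" using Rcl_self assms Rcls_eq by auto
  then obtain e where "idem e" "e \<in> P" "greenR_in P x e" using Rhat_greenR_in_idem by blast
  then show ?thesis using x Rcl_def by auto
qed

abbreviation "ES \<equiv> Egen (leftmult a)"
abbreviation "EaSa \<equiv> Egen (sandwich a)"

lemma Egen_leftmult_subset: "ES \<subseteq> leftmult a"
  unfolding Egen_def by (rule sgp_gen_least) (auto intro: leftmult_mult)

lemma Egen_leftmult_subset_P: "ES \<subseteq> P"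
  unfolding Egen_def by (rule sgp_gen_least) (auto intro: P_mult idem_in_P)

lemma Egen_sandwich_subset: "EaSa \<subseteq> sandwich a"
  unfolding Egen_def by (rule sgp_gen_least) (auto intro: sandwich_mult)

lemma Egen_sandwich_subset_Egen_leftmult: "EaSa \<subseteq> ES"
  unfolding Egen_def using sandwich_subset_P P_eq by (intro sgp_gen_mono) auto

lemma a_in_Egen_sandwich: "a \<in> EaSa"
  unfolding Egen_def using a_in_sandwich a_idem by (auto intro: sgp_gen.base)

lemma a_mult_in_Egen_sandwich: "z \<in> ES \<Longrightarrow> a * z \<in> EaSa"
  unfolding Egen_def
proof (induction z rule: sgp_gen.induct)
  case (base x)
  then have "x * a = x" "x * x = x" using leftmult_iff idem_def by auto
  then have "idem (a * x)" "a * x \<in> sandwich a"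
    using a_mult_in_sandwich unfolding idem_def by (metis mult.assoc)+
  then show ?case by (auto intro: sgp_gen.base)
next
  case (mult x y)
  then have "x * a = x" using Egen_leftmult_subset leftmult_iff unfolding Egen_def by auto
  then show ?case using mult.IH by (simp add: a_mult_hom sgp_gen.mult)
qed

lemma Egen_sandwich_right_inverse: "w \<in> EaSa \<Longrightarrow> w * t = a \<Longrightarrow> w = a"
  unfolding Egen_def
proof (induction w arbitrary: t rule: sgp_gen.induct)
  case (base x)
  then have "x * a = x" "x * x = x" using sandwich_iff idem_def by auto
  then show ?case using base.prems by (metis mult.assoc)
next
  case (mult x y)
  then have "x = a" by (simp add: mult.assoc)
  moreover have "a * y = y"
    using mult.hyps(2) Egen_sandwich_subset sandwich_iff unfolding Egen_def by auto
  ultimately have "y = a" using mult.IH(2)[of t] mult.prems by simp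
  with \<open>x = a\<close> show ?case using a_mult_a by simp
qed

definition lower_set :: "'a set \<Rightarrow> 'a set" where
  "lower_set X = insert a ((*) a ` (X - Rhat))"

lemma generates_lower_set:
  assumes "generates ES X"
  shows "generates EaSa (lower_set X)"
proof -
  have XT: "X \<subseteq> ES" and sX: "sgp_gen X = ES" using assms generates_def by auto
  have ZW: "lower_set X \<subseteq> EaSa"
    unfolding lower_set_def using a_in_Egen_sandwich a_mult_in_Egen_sandwich XT by auto
  have Rhat_gen: "a * x = a" if x: "x \<in> X" "x \<in> Rhat" for x
  proof -
    obtain t where "a * x * t = a" using x(2) Rhat_iff by blast
    moreover have "a * x \<in> EaSa" using x(1) XT a_mult_in_Egen_sandwich by blast
    ultimately show ?thesis using Egen_sandwich_right_inverse by blast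
  qed
  have a_mult_gen: "a * z \<in> sgp_gen (lower_set X)" if "z \<in> sgp_gen X" for z
    using that
  proof (induction z rule: sgp_gen.induct)
    case (base x)
    then show ?case
      using Rhat_gen unfolding lower_set_def by (cases "x \<in> Rhat") (auto intro: sgp_gen.base)
  next
    case (mult x y)
    then have "x * a = x" using sX Egen_leftmult_subset leftmult_iff by auto
    then show ?case using sgp_gen.mult[OF mult.IH] by (simp add: a_mult_hom)
  qed
  have "EaSa \<subseteq> sgp_gen (lower_set X)"
  proof
    fix w assume w: "w \<in> EaSa"
    then have "a * w = w" using Egen_sandwich_subset sandwich_iff by auto
    moreover have "w \<in> sgp_gen X" using w Egen_sandwich_subset_Egen_leftmult sX by auto
    ultimately show "w \<in> sgp_gen (lower_set X)" using a_mult_gen by metis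
  qed
  moreover have "sgp_gen (lower_set X) \<subseteq> EaSa"
    using ZW by (rule sgp_gen_least) (unfold Egen_def, rule sgp_gen.mult)
  ultimately show ?thesis using ZW generates_def by blast
qed

lemma lower_set_idem:
  assumes "X \<subseteq> ES" and "\<forall>x\<in>X. idem x"
  shows "\<forall>z\<in>lower_set X. idem z"
proof
  fix z assume "z \<in> lower_set X"
  then consider "z = a" | x where "x \<in> X" "z = a * x" unfolding lower_set_def by blast
  then show "idem z"
  proof cases
    case (2 x)
    then have "x * a = x" "x * x = x"
      using assms Egen_leftmult_subset leftmult_iff idem_def by blast+
    then show ?thesis using 2 unfolding idem_def by (metis mult.assoc)
  qed (use a_idem in simp)
qed

text \<open>Each class in \<open>Rcls\<close> contains an idempotent of \<open>Sa\<close>; the first generator in a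
  factorisation of it is a left factor, hence lies in \<open>\<widehat>R\<^sup>a\<^sub>a\<close> and in the same class.\<close>
lemma Rcls_generator:
  assumes "generates ES X" and "C \<in> Rcls"
  shows "\<exists>x\<in>X \<inter> Rhat. Rcl x = C"
proof -
  have XT: "X \<subseteq> ES" and sX: "sgp_gen X = ES" using assms(1) generates_def by auto
  obtain e where e: "e \<in> C" "idem e" using Rcls_idem assms(2) by blast
  have eR: "e \<in> Rhat" using e assms(2) Rcls_eq by auto
  then have eP: "e \<in> P" using Rhat_iff by auto
  obtain x0 where "x0 \<in> P" "C = Rcl x0" using assms(2) Rcls_eq R_classes_P_eq by auto
  then have Ce: "C = Rcl e" using e Rcl_eq Rcl_def by auto
  have "e \<in> ES" using e eP P_eq unfolding Egen_def by (auto intro: sgp_gen.base)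
  then obtain x where x: "x \<in> X" "e = x \<or> (\<exists>q\<in>sgp_gen X. e = x * q)"
    using sgp_gen_left_factor sX by blast
  have "x \<in> P" using x XT Egen_leftmult_subset_P by auto
  moreover have "e \<in> insert x ((*) x ` P)" using x sX Egen_leftmult_subset_P by auto
  ultimately have "x \<in> Rhat \<and> Rcl x = Rcl e" using Rhat_prefix eR by blast
  then show ?thesis using x Ce by blast
qed

lemma card_lower_set_Plus:
  assumes "generates ES X"
  shows "|lower_set X <+> Rcls| \<le>o |X <+> (UNIV :: unit set)|"
proof (rule surj_imp_ordLeq)
  define h where "h u = (case u of Inl x \<Rightarrow> if x \<in> Rhat then Inr (Rcl x) else Inl (a * x)
                                | Inr (_::unit) \<Rightarrow> Inl a)" for u
  show "lower_set X <+> Rcls \<subseteq> h ` (X <+> UNIV)"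
  proof
    fix u assume "u \<in> lower_set X <+> Rcls"
    then consider z where "u = Inl z" "z \<in> lower_set X" | C where "u = Inr C" "C \<in> Rcls"
      by blast
    then show "u \<in> h ` (X <+> UNIV)"
    proof cases
      case (1 z)
      then consider "z = a" | x where "x \<in> X" "x \<notin> Rhat" "z = a * x"
        unfolding lower_set_def by blast
      then show ?thesis
      proof cases
        case 1
        then have "u = h (Inr ())" using \<open>u = Inl z\<close> h_def by simp
        then show ?thesis by blast
      next
        case (2 x)
        then have "u = h (Inl x)" using \<open>u = Inl z\<close> h_def by simp
        then show ?thesis using \<open>x \<in> X\<close> by blast
      qed
    next
      case (2 C)
      then obtain x where "x \<in> X" "x \<in> Rhat" "Rcl x = C" using Rcls_generator assms by blast
      then have "u = h (Inl x)" using 2 h_def by simp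
      then show ?thesis using \<open>x \<in> X\<close> by blast
    qed
  qed
qed

definition class_idem :: "'a set \<Rightarrow> 'a" where
  "class_idem C = (SOME e. e \<in> C \<and> idem e)"

lemma class_idem:
  assumes "C \<in> Rcls"
  shows "class_idem C \<in> C \<and> idem (class_idem C)"
proof -
  have "\<exists>e. e \<in> C \<and> idem e" using Rcls_idem[OF assms] by blast
  then show ?thesis unfolding class_idem_def by (rule someI_ex)
qed

definition upper_set :: "'a set \<Rightarrow> 'a set" where
  "upper_set Y = Y \<union> class_idem ` (Rcls - {Rcl a})"

text \<open>If \<open>e\<close> is a right identity of \<open>P\<close> with \<open>f \<in> eP\<^sup>1\<close>, then \<open>e \<in> \<widehat>R\<^sup>a\<^sub>a\<close> (as \<open>a e = a\<close>), and the
  chosen idempotent \<open>g\<close> of its class satisfies \<open>g e = e\<close>; hence \<open>f = e f = g e a f = g (a f)\<close>.\<close>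
lemma RI_dominated_factor:
  assumes "RI_dominated P" and "f \<in> P"
  shows "\<exists>g\<in>insert a (class_idem ` (Rcls - {Rcl a})). f = g * (a * f)"
proof -
  obtain e where e: "e \<in> P" "\<forall>t\<in>P. t * e = t" "f \<in> insert e ((*) e ` P)"
    using assms unfolding RI_dominated_def by blast
  have fe: "e * f = f" using e by (auto simp: mult.assoc[symmetric])
  have "a * e = a" using e a_in_P by auto
  then have eR: "e \<in> Rhat" using Rhat_iff e(1) a_in_sandwich a_mult_a by metis
  show ?thesis
  proof (cases "Rcl e = Rcl a")
    case True
    then have "greenR_in P a e" using Rcl_self e(1) unfolding Rcl_def by blast
    then have "e \<in> insert a ((*) a ` P)" by (rule greenR_in_mem)
    then have "a * e = e" using a_mult_a by (auto simp: mult.assoc[symmetric])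
    then have "f = a * (a * f)" using fe by (metis mult.assoc)
    then show ?thesis by blast
  next
    case False
    define g where "g = class_idem (Rcl e)"
    have C: "Rcl e \<in> Rcls" using Rcl_in_Rcls eR by blast
    then have g: "g \<in> Rcl e" "g * g = g" using class_idem g_def idem_def by auto
    then have "greenR_in P g e" using greenR_in_sym unfolding Rcl_def by blast
    then have "e \<in> insert g ((*) g ` P)" by (rule greenR_in_mem)
    then have "g * e = e" using g(2) by (auto simp: mult.assoc[symmetric])
    moreover have "g * a = g" using g(1) Rcl_def P_mult_a by auto
    ultimately have "f = g * (a * f)" using fe by (metis mult.assoc)
    moreover have "g \<in> class_idem ` (Rcls - {Rcl a})" using g_def C False by auto
    ultimately show ?thesis by blast
  qed
qed

lemma generates_upper_set:
  assumes "generates EaSa Y" and "RI_dominated P"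
  shows "generates ES (upper_set Y)"
proof -
  have YW: "Y \<subseteq> EaSa" and sY: "sgp_gen Y = EaSa" using assms(1) generates_def by auto
  have gens: "class_idem ` (Rcls - {Rcl a}) \<subseteq> ES"
  proof
    fix g assume "g \<in> class_idem ` (Rcls - {Rcl a})"
    then obtain C where C: "C \<in> Rcls" "g = class_idem C" by blast
    then have "g \<in> P" "idem g" using class_idem Rcls_eq Rhat_iff by auto
    then show "g \<in> ES" using P_eq unfolding Egen_def by (auto intro: sgp_gen.base)
  qed
  have XT: "upper_set Y \<subseteq> ES"
    unfolding upper_set_def using YW Egen_sandwich_subset_Egen_leftmult gens by auto
  have sY_sub: "EaSa \<subseteq> sgp_gen (upper_set Y)"
    using sY sgp_gen_mono[of Y "upper_set Y"] unfolding upper_set_def by auto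
  have "{e \<in> leftmult a. idem e} \<subseteq> sgp_gen (upper_set Y)"
  proof
    fix f assume f: "f \<in> {e \<in> leftmult a. idem e}"
    then have "f \<in> ES" unfolding Egen_def by (auto intro: sgp_gen.base)
    then have "a * f \<in> sgp_gen (upper_set Y)" using a_mult_in_Egen_sandwich sY_sub by blast
    moreover obtain g where "g \<in> insert a (class_idem ` (Rcls - {Rcl a}))" "f = g * (a * f)"
      using RI_dominated_factor assms(2) f idem_in_P by blast
    moreover have "insert a (class_idem ` (Rcls - {Rcl a})) \<subseteq> sgp_gen (upper_set Y)"
      using a_in_Egen_sandwich sY_sub unfolding upper_set_def by (auto intro: sgp_gen.base)
    ultimately show "f \<in> sgp_gen (upper_set Y)" by (metis sgp_gen.mult subsetD)
  qed
  then have "ES \<subseteq> sgp_gen (upper_set Y)"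
    unfolding Egen_def by (rule sgp_gen_least) (rule sgp_gen.mult)
  moreover have "sgp_gen (upper_set Y) \<subseteq> ES"
    using XT by (rule sgp_gen_least) (unfold Egen_def, rule sgp_gen.mult)
  ultimately show ?thesis using XT generates_def by blast
qed

lemma upper_set_idem: "\<forall>y\<in>Y. idem y \<Longrightarrow> \<forall>x\<in>upper_set Y. idem x"
  unfolding upper_set_def using class_idem by auto

lemma card_upper_set_Plus: "|upper_set Y <+> (UNIV :: unit set)| \<le>o |Y <+> Rcls|"
proof (rule surj_imp_ordLeq)
  define h where "h u = (case u of Inl y \<Rightarrow> Inl y
                   | Inr C \<Rightarrow> if C = Rcl a then Inr () else Inl (class_idem C))" for u
  have "Rcl a \<in> Rcls" using Rcl_in_Rcls a_in_Rhat by blast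
  then have "Inr () = h (Inr (Rcl a))" unfolding h_def by simp
  moreover have "Inl z \<in> h ` (Y <+> Rcls)" if z: "z \<in> upper_set Y" for z
  proof (cases "z \<in> Y")
    case True
    then show ?thesis unfolding h_def by force
  next
    case False
    then obtain C where "C \<in> Rcls" "C \<noteq> Rcl a" "z = class_idem C"
      using z unfolding upper_set_def by auto
    then have "Inl z = h (Inr C)" unfolding h_def by simp
    then show ?thesis using \<open>C \<in> Rcls\<close> by blast
  qed
  ultimately show "upper_set Y <+> UNIV \<subseteq> h ` (Y <+> Rcls)"
    using \<open>Rcl a \<in> Rcls\<close> by auto
qed

end

theorem theorem3p30:
  fixes a :: "'a::semigroup_mult"
  assumes a_idem: "idem a"
    and reg: "sandwich a \<subseteq> Reg"
  defines "P \<equiv> {x \<in> leftmult a. greenL x (a * x)}"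
  defines "Rhat \<equiv> {x \<in> P. greenR_in (sandwich a) (a * x) a}"
  defines "Rcls \<equiv> {C \<in> R_classes P. C \<subseteq> Rhat}"
  shows "(card_of (rank_set (Egen (sandwich a)) <+> Rcls),
          card_of (rank_set (Egen (leftmult a)) <+> (UNIV :: unit set))) \<in> ordLeq
       \<and> (card_of (idrank_set (Egen (sandwich a)) <+> Rcls),
          card_of (idrank_set (Egen (leftmult a)) <+> (UNIV :: unit set))) \<in> ordLeq
       \<and> (RI_dominated P \<longrightarrow>
           (card_of (rank_set (Egen (sandwich a)) <+> Rcls),
            card_of (rank_set (Egen (leftmult a)) <+> (UNIV :: unit set))) \<in> ordIso
         \<and> (card_of (idrank_set (Egen (sandwich a)) <+> Rcls),
            card_of (idrank_set (Egen (leftmult a)) <+> (UNIV :: unit set))) \<in> ordIso)"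
proof -
  interpret idempotent_corner a P Rhat Rcls
    using a_idem by unfold_locales (simp_all add: P_def Rhat_def Rcls_def)
  note rk = rank_set_Egen and idrk = idrank_set_Egen
  have "|rank_set EaSa <+> Rcls| \<le>o |rank_set ES <+> (UNIV :: unit set)|"
    by (rule minimal_Plus_ordLeq[OF conjunct2[OF rk] generates_lower_set card_lower_set_Plus])
      (rule conjunct1[OF rk])+
  moreover have "|idrank_set EaSa <+> Rcls| \<le>o |idrank_set ES <+> (UNIV :: unit set)|"
    by (rule minimal_Plus_ordLeq[OF conjunct2[OF conjunct2[OF idrk]]
          conjI[OF generates_lower_set lower_set_idem] card_lower_set_Plus])
      (use idrk generates_def in blast)+
  moreover have "|rank_set ES <+> (UNIV :: unit set)| \<le>o |rank_set EaSa <+> Rcls|"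
    if "RI_dominated P"
    by (rule minimal_Plus_ordLeq[OF conjunct2[OF rk] generates_upper_set[OF _ that]
          card_upper_set_Plus]) (rule conjunct1[OF rk])
  moreover have "|idrank_set ES <+> (UNIV :: unit set)| \<le>o |idrank_set EaSa <+> Rcls|"
    if "RI_dominated P"
    by (rule minimal_Plus_ordLeq[OF conjunct2[OF conjunct2[OF idrk]]
          conjI[OF generates_upper_set[OF _ that] upper_set_idem] card_upper_set_Plus])
      (use idrk in blast)+
  ultimately show ?thesis by (simp add: ordIso_iff_ordLeq)
qed

end
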